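(* If $m>n\ge 1$ are natural numbers, then $\mathrm{Log}_{>1}(\mathbb{R}^n)\not\subseteq \mathrm{Log}_{>1}(\mathbb{R}^m)$. Consequently, the logics $\mathrm{Log}_{>1}(\mathbb{R}^n)$, $n\ge 1$, are pairwise distinct.
   Context: Modal formulas are built from a countable set of propositional variables using $\bot$, $\to$ and one unary modality $\lozenge$. A frame is a pair $(X,R)$; a valuation assigns subsets of $X$ to variables; $x\models\lozenge\varphi$ iff there is $y$ with $xRy$ and $y\models\varphi$. A formula is valid in a frame if true at every point under every valuation. For a metric space $(X,d)$, $\mathrm{Log}_{>1}(X)$ is the set of modal formulas valid in the frame $(X,R_{>1})$, where $xR_{>1}y$ iff $d(x,y)>1$. $\mathbb{R}^n$ carries the Euclidean metric. *)

theory Defs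
  imports "HOL-Analysis.Analysis"
begin

datatype fm = Var nat | Bot | Imp fm fm | Dia fm

fun sat :: "('a \<Rightarrow> 'a \<Rightarrow> bool) \<Rightarrow> (nat \<Rightarrow> 'a set) \<Rightarrow> 'a \<Rightarrow> fm \<Rightarrow> bool" where
  "sat R V x (Var p) = (x \<in> V p)"
| "sat R V x Bot = False"
| "sat R V x (Imp a b) = (sat R V x a \<longrightarrow> sat R V x b)"
| "sat R V x (Dia a) = (\<exists>y. R x y \<and> sat R V y a)"

definition valid_frame :: "('a \<Rightarrow> 'a \<Rightarrow> bool) \<Rightarrow> fm \<Rightarrow> bool" where
  "valid_frame R \<phi> \<longleftrightarrow> (\<forall>V x. sat R V x \<phi>)"

definition Log_gt1 :: "'a::metric_space itself \<Rightarrow> fm set" where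
  "Log_gt1 _ = {\<phi>. valid_frame (\<lambda>x y::'a. dist x y > 1) \<phi>}"

end

theory Submission
  imports Defs
begin

text \<open>
  In the frame \<open>(X, R\<^sub>>\<^sub>1)\<close> on a Euclidean space any point reaches any other in two steps, so
  \<open>\<diamond>\<diamond>\<close> is the universal modality, and \<open>\<box>\<not>p\<close> holds exactly on the intersection of the unit
  balls centred at the points of \<open>p\<close>. Hence the formula \<open>helly_fm k\<close> expresses Helly's property
  for \<open>k\<close> such sets: if any \<open>k - 1\<close> of them meet, all of them meet. These sets are convex, so by
  Helly's theorem \<open>helly_fm (n + 2)\<close> is valid on \<open>\<real>\<^sup>n\<close>. On \<open>\<real>\<^sup>m\<close> with \<open>m > n\<close> it fails: the unit
  balls around \<open>n + 1\<close> basis vectors \<open>e\<^sub>i\<close>, together with a small ball around \<open>-s \<Sum> e\<^sub>i\<close>, meet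
  \<open>n + 1\<close> at a time but not all together; and a ball of radius \<open>r \<le> 1\<close> is the intersection of the
  unit balls centred on a sphere of radius \<open>1 - r\<close>.
\<close>

definition helly_condition :: "'i set \<Rightarrow> ('i \<Rightarrow> 'a set) \<Rightarrow> bool" where
  "helly_condition I C \<longleftrightarrow> (\<forall>j\<in>I. (\<Inter>i\<in>I - {j}. C i) \<noteq> {}) \<longrightarrow> (\<Inter>i\<in>I. C i) \<noteq> {}"

lemma helly_condition_reindex:
  assumes "bij_betw g J I"
  shows "helly_condition J (C \<circ> g) \<longleftrightarrow> helly_condition I C"
proof -
  have I: "I = g ` J" and inj: "inj_on g J"
    using assms by (auto simp: bij_betw_def)
  have img: "g ` (J - {j}) = I - {g j}" if "j \<in> J" for j
    using that inj unfolding I inj_on_def by auto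
  have "(\<Inter>i\<in>J - {j}. C (g i)) = (\<Inter>i\<in>I - {g j}. C i)" if "j \<in> J" for j
    unfolding img[OF that, symmetric] image_image ..
  then have ex: "(\<forall>j\<in>J. (\<Inter>i\<in>J - {j}. C (g i)) \<noteq> {}) \<longleftrightarrow> (\<forall>j\<in>I. (\<Inter>i\<in>I - {j}. C i) \<noteq> {})"
    unfolding I by simp
  have all: "(\<Inter>i\<in>J. C (g i)) = (\<Inter>i\<in>I. C i)"
    unfolding I image_image ..
  show ?thesis
    unfolding helly_condition_def comp_def ex all by (rule refl)
qed

lemma helly_condition_convex:
  fixes C :: "'i \<Rightarrow> 'a::euclidean_space set"
  assumes card: "DIM('a) + 2 \<le> card I" and convex: "\<And>i. i \<in> I \<Longrightarrow> convex (C i)"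
  shows "helly_condition I C"
  unfolding helly_condition_def
proof
  assume pierced: "\<forall>j\<in>I. (\<Inter>i\<in>I - {j}. C i) \<noteq> {}"
  show "(\<Inter>i\<in>I. C i) \<noteq> {}"
  proof (cases "inj_on C I")
    case False
    then obtain a b where "a \<in> I" "b \<in> I" "a \<noteq> b" "C a = C b"
      by (auto simp: inj_on_def)
    then have "(\<Inter>i\<in>I - {a}. C i) \<subseteq> (\<Inter>i\<in>I. C i)"
      by blast
    then show ?thesis
      using pierced \<open>a \<in> I\<close> by blast
  next
    case True
    then have card_image: "card (C ` I) = card I"
      by (rule card_image)
    show ?thesis
    proof (rule Helly)
      show "DIM('a) + 1 \<le> card (C ` I)"
        using card card_image by simp
      show "\<forall>S\<in>C ` I. convex S"
        using convex by blast
    next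
      fix T assume T: "T \<subseteq> C ` I" "card T = DIM('a) + 1"
      then have "T \<noteq> C ` I"
        using card card_image by auto
      then obtain j where "j \<in> I" "C j \<notin> T"
        using T(1) by blast
      then have "(\<Inter>i\<in>I - {j}. C i) \<subseteq> \<Inter>T"
        using T(1) by blast
      then show "\<Inter>T \<noteq> {}"
        using pierced \<open>j \<in> I\<close> by blast
    qed
  qed
qed

lemma cball_eq_Inter_unit_cballs:
  fixes c :: "'a::real_normed_vector"
  assumes "0 \<le> r" "r \<le> 1"
  shows "cball c r = (\<Inter>w\<in>sphere c (1 - r). cball w 1)"
proof (intro equalityI subsetI INT_I)
  fix z w assume "z \<in> cball c r" "w \<in> sphere c (1 - r)"
  then show "z \<in> cball w 1"
    using dist_triangle[of w z c] by (simp add: dist_commute)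
next
  fix z assume z: "z \<in> (\<Inter>w\<in>sphere c (1 - r). cball w 1)"
  show "z \<in> cball c r"
  proof (rule ccontr)
    define \<delta> where "\<delta> = dist c z"
    assume "z \<notin> cball c r"
    then have "\<delta> > r"
      by (simp add: \<delta>_def)
    then have "\<delta> > 0"
      using assms by linarith
    \<comment> \<open>the point of the sphere diametrically opposite to \<open>z\<close>\<close>
    define w where "w = c + ((1 - r) / \<delta>) *\<^sub>R (c - z)"
    have norm_cz: "norm (c - z) = \<delta>"
      by (simp add: \<delta>_def dist_norm)
    have "w \<in> sphere c (1 - r)"
      using \<open>\<delta> > 0\<close> assms by (simp add: w_def dist_norm norm_cz)
    have "w - z = (1 + (1 - r) / \<delta>) *\<^sub>R (c - z)"
      by (simp add: w_def algebra_simps)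
    then have "dist w z = (1 + (1 - r) / \<delta>) * \<delta>"
      using \<open>\<delta> > 0\<close> assms by (simp add: dist_norm norm_cz)
    also have "\<dots> = \<delta> + (1 - r)"
      using \<open>\<delta> > 0\<close> by (simp add: field_simps)
    finally have "dist w z > 1"
      using \<open>\<delta> > r\<close> by simp
    then show False
      using z \<open>w \<in> sphere c (1 - r)\<close> by force
  qed
qed

lemma inner_Basis_sum_subset:
  assumes "B \<subseteq> Basis" "b \<in> Basis"
  shows "b \<bullet> \<Sum>B = (if b \<in> B then 1 else 0)"
proof -
  have "finite B"
    using assms(1) finite_Basis by (rule finite_subset)
  have "b \<bullet> \<Sum>B = (\<Sum>c\<in>B. if b = c then 1 else 0)"
    unfolding inner_sum_right using assms by (intro sum.cong) (auto simp: inner_Basis)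
  also have "\<dots> = (if b \<in> B then 1 else 0)"
    using \<open>finite B\<close> by (rule sum.delta')
  finally show ?thesis .
qed

lemma power2_norm_sum_Basis_subset:
  assumes "B \<subseteq> Basis"
  shows "(norm (\<Sum>B))\<^sup>2 = card B"
proof -
  have "(norm (\<Sum>B))\<^sup>2 = (\<Sum>b\<in>B. b \<bullet> \<Sum>B)"
    by (simp add: power2_norm_eq_inner inner_sum_left)
  also have "\<dots> = card B"
    using assms by (simp add: inner_Basis_sum_subset subset_eq)
  finally show ?thesis .
qed

lemma power2_dist_Basis:
  assumes "b \<in> Basis"
  shows "(dist b z)\<^sup>2 = (norm z)\<^sup>2 - 2 * (z \<bullet> b) + 1"
  using assms by (simp add: dist_norm power2_norm_eq_inner inner_diff_left inner_diff_right inner_commute)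

lemma unit_cballs_Basis_far_from_opposite:
  fixes z :: "'a::euclidean_space" and s :: real
  assumes A: "A \<subseteq> Basis" and "0 \<le> s" and z: "\<And>b. b \<in> A \<Longrightarrow> z \<in> cball b 1"
  shows "card A * s\<^sup>2 \<le> (dist (- s *\<^sub>R \<Sum>A) z)\<^sup>2"
proof -
  have "(norm z)\<^sup>2 \<le> 2 * (z \<bullet> b)" if "b \<in> A" for b
  proof -
    have "(dist b z)\<^sup>2 \<le> 1"
      using z[OF that] by (simp add: power_le_one)
    then show ?thesis
      using A that power2_dist_Basis[of b z] by auto
  qed
  then have "(\<Sum>b\<in>A. (norm z)\<^sup>2) \<le> (\<Sum>b\<in>A. 2 * (z \<bullet> b))"
    by (rule sum_mono)
  then have "card A * (norm z)\<^sup>2 \<le> 2 * (z \<bullet> \<Sum>A)"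
    by (simp add: inner_sum_right sum_distrib_left)
  then have "0 \<le> z \<bullet> \<Sum>A"
    using mult_nonneg_nonneg[OF of_nat_0_le_iff zero_le_power2, of "card A" "norm z"] by linarith
  have "dist (- s *\<^sub>R \<Sum>A) z = norm (z + s *\<^sub>R \<Sum>A)"
  proof -
    have "- s *\<^sub>R \<Sum>A - z = - (z + s *\<^sub>R \<Sum>A)"
      by simp
    then show ?thesis
      by (simp only: dist_norm norm_minus_cancel)
  qed
  then have "(dist (- s *\<^sub>R \<Sum>A) z)\<^sup>2 = (norm (z + s *\<^sub>R \<Sum>A))\<^sup>2"
    by simp
  also have "\<dots> = (norm z)\<^sup>2 + 2 * s * (z \<bullet> \<Sum>A) + s\<^sup>2 * (norm (\<Sum>A))\<^sup>2"
    unfolding power2_norm_eq_inner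
    by (simp add: inner_commute power2_eq_square algebra_simps)
  also have "\<dots> = (norm z)\<^sup>2 + 2 * s * (z \<bullet> \<Sum>A) + card A * s\<^sup>2"
    using A by (simp add: power2_norm_sum_Basis_subset)
  finally show ?thesis
    using \<open>0 \<le> s\<close> \<open>0 \<le> z \<bullet> \<Sum>A\<close> by (simp add: add_increasing)
qed

lemma unit_cballs_Basis_witness:
  fixes a :: "'a::euclidean_space" and s :: real
  assumes A: "A \<subseteq> Basis" "a \<in> A" and "0 \<le> s" and small: "(real (card A) - 1) * s\<^sup>2 \<le> 1"
  defines "z \<equiv> s\<^sup>2 *\<^sub>R \<Sum>(A - {a}) - s *\<^sub>R a"
  shows "\<And>b. b \<in> A - {a} \<Longrightarrow> z \<in> cball b 1"
    and "dist (- s *\<^sub>R \<Sum>A) z = sqrt (real (card A) - 1) * (s + s\<^sup>2)"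
proof -
  let ?u = "\<Sum>(A - {a})"
  have fin: "finite A"
    using A(1) finite_Basis by (rule finite_subset)
  have card: "real (card (A - {a})) = real (card A) - 1"
  proof -
    have "0 < card A"
      using A(2) fin card_gt_0_iff by blast
    then show ?thesis
      using A(2) by simp
  qed
  have a: "a \<in> Basis" "a \<bullet> ?u = 0"
    using A inner_Basis_sum_subset[of "A - {a}" a] by auto
  have u: "(norm ?u)\<^sup>2 = real (card A) - 1"
    unfolding card[symmetric] using A by (intro power2_norm_sum_Basis_subset) auto
  have "(norm z)\<^sup>2 = (s\<^sup>2)\<^sup>2 * (norm ?u)\<^sup>2 + s\<^sup>2"
    using a unfolding power2_norm_eq_inner
    by (simp add: z_def inner_commute power2_eq_square algebra_simps)
  then have norm_z: "(norm z)\<^sup>2 = (real (card A) - 1) * (s\<^sup>2)\<^sup>2 + s\<^sup>2"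
    unfolding u by simp
  show "z \<in> cball b 1" if b: "b \<in> A - {a}" for b
  proof -
    have "b \<in> Basis" "b \<bullet> a = 0" "b \<bullet> ?u = 1"
      using A b a(1) inner_Basis_sum_subset[of "A - {a}" b] by (auto simp: inner_not_same_Basis)
    then have "b \<in> Basis" "z \<bullet> b = s\<^sup>2"
      by (simp_all add: z_def inner_diff_left inner_commute[of a b] inner_commute[of ?u b])
    then have "(dist b z)\<^sup>2 = 1 - s\<^sup>2 + (real (card A) - 1) * (s\<^sup>2)\<^sup>2"
      using norm_z by (simp add: power2_dist_Basis)
    also have "\<dots> \<le> 1"
      using mult_right_mono[OF small, of "s\<^sup>2"] by (simp add: power2_eq_square algebra_simps)
    finally show ?thesis
      by (simp add: power_le_one_iff)
  qed
  have "\<Sum>A = a + ?u"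
    using A fin by (simp add: sum.remove)
  then have "z - (- s *\<^sub>R \<Sum>A) = (s + s\<^sup>2) *\<^sub>R ?u"
    by (simp add: z_def algebra_simps)
  then have "dist (- s *\<^sub>R \<Sum>A) z = (s + s\<^sup>2) * norm ?u"
    using \<open>0 \<le> s\<close> by (simp add: dist_norm norm_minus_commute)
  also have "norm ?u = sqrt (real (card A) - 1)"
    using u by (metis norm_ge_zero real_sqrt_unique)
  finally show "dist (- s *\<^sub>R \<Sum>A) z = sqrt (real (card A) - 1) * (s + s\<^sup>2)"
    by simp
qed

lemma Basis_cballs_parameter_bounds:
  fixes D :: real
  assumes "1 \<le> D"
  defines "s \<equiv> 1 / (2 * D)"
  shows "(D - 1) * s\<^sup>2 \<le> 1" and "(D - 1) * (s + s\<^sup>2)\<^sup>2 < D * s\<^sup>2" and "D * s\<^sup>2 \<le> 1"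
proof -
  have "0 < s" "s \<le> 1 / 2"
    using assms by (simp_all add: s_def field_simps)
  have "D * s\<^sup>2 = s / 2"
    using assms by (simp add: s_def power2_eq_square field_simps)
  then show "D * s\<^sup>2 \<le> 1"
    using \<open>s \<le> 1 / 2\<close> by simp
  then show "(D - 1) * s\<^sup>2 \<le> 1"
    unfolding left_diff_distrib using zero_le_power2[of s] by linarith
  have "(D - 1) * (1 + s)\<^sup>2 = D - 3 / 2 * s - s\<^sup>2"
    using assms unfolding s_def by (simp add: power2_eq_square field_simps)
  also have "\<dots> < D"
    using \<open>0 < s\<close> zero_le_power2[of s] by linarith
  finally have "(D - 1) * (1 + s)\<^sup>2 * s\<^sup>2 < D * s\<^sup>2"
    using \<open>0 < s\<close> by (intro mult_strict_right_mono) auto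
  then show "(D - 1) * (s + s\<^sup>2)\<^sup>2 < D * s\<^sup>2"
    by (simp add: power2_eq_square algebra_simps)
qed

lemma Basis_cballs_not_helly:
  fixes A :: "'a::euclidean_space set"
  assumes A: "A \<subseteq> Basis" "A \<noteq> {}"
  shows "\<exists>c r. 0 \<le> r \<and> r \<le> 1 \<and>
    \<not> helly_condition (insert 0 A) (\<lambda>v. if v = 0 then cball c r else cball v 1)"
proof -
  have "finite A"
    using A(1) finite_Basis by (rule finite_subset)
  define D where "D = real (card A)"
  have "1 \<le> D"
    using A(2) \<open>finite A\<close> by (simp add: D_def Suc_le_eq card_gt_0_iff)
  define s where "s = 1 / (2 * D)"
  define c where "c = - s *\<^sub>R \<Sum>A"
  define r where "r = sqrt (D - 1) * (s + s\<^sup>2)"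
  note params = Basis_cballs_parameter_bounds[OF \<open>1 \<le> D\<close>, folded s_def]
  have "0 \<le> s"
    using \<open>1 \<le> D\<close> by (simp add: s_def)
  then have "0 \<le> r"
    using \<open>1 \<le> D\<close> by (simp add: r_def)
  have r2: "r\<^sup>2 < D * s\<^sup>2"
    using params(2) \<open>1 \<le> D\<close> by (simp add: r_def power_mult_distrib)
  then have "r\<^sup>2 \<le> 1"
    using params(3) by linarith
  then have "r \<le> 1"
    using power_le_one_iff[OF \<open>0 \<le> r\<close>, of 2] by simp
  let ?C = "\<lambda>v. if v = 0 then cball c r else cball v 1"
  have "z \<notin> (\<Inter>v\<in>insert 0 A. ?C v)" for z
  proof
    assume "z \<in> (\<Inter>v\<in>insert 0 A. ?C v)"
    then have "dist c z \<le> r" and "\<And>b. b \<in> A \<Longrightarrow> z \<in> cball b 1"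
      using A(1) by auto
    then have "D * s\<^sup>2 \<le> (dist c z)\<^sup>2"
      using unit_cballs_Basis_far_from_opposite[OF A(1) \<open>0 \<le> s\<close>] by (simp add: D_def c_def)
    also have "\<dots> \<le> r\<^sup>2"
      using \<open>dist c z \<le> r\<close> by (simp add: power_mono)
    finally show False
      using r2 by simp
  qed
  moreover have "(\<Inter>v\<in>insert 0 A - {j}. ?C v) \<noteq> {}" if "j \<in> insert 0 A" for j
  proof (cases "j = 0")
    case True
    have "0 \<in> cball b 1" if "b \<in> A" for b
      using A(1) that by auto
    then have "0 \<in> (\<Inter>v\<in>insert 0 A - {j}. ?C v)"
      using True by auto
    then show ?thesis
      by blast
  next
    case False
    with that have "j \<in> A"
      by simp
    let ?z = "s\<^sup>2 *\<^sub>R \<Sum>(A - {j}) - s *\<^sub>R j"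
    note witness = unit_cballs_Basis_witness[OF A(1) \<open>j \<in> A\<close> \<open>0 \<le> s\<close> params(1)[unfolded D_def]]
    have "?z \<in> cball c r"
      using witness(2) by (simp add: c_def r_def D_def)
    moreover have "?z \<in> cball b 1" if "b \<in> A - {j}" for b
      using witness(1)[OF that] .
    ultimately have "?z \<in> ?C v" if "v \<in> insert 0 A - {j}" for v
      using that by (cases "v = 0") auto
    then show ?thesis
      by blast
  qed
  ultimately show ?thesis
    using \<open>0 \<le> r\<close> \<open>r \<le> 1\<close> unfolding helly_condition_def by blast
qed

definition Neg :: "fm \<Rightarrow> fm" where
  "Neg a = Imp a Bot"

definition Box :: "fm \<Rightarrow> fm" where
  "Box a = Neg (Dia (Neg a))"

fun Conj :: "fm list \<Rightarrow> fm" where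
  "Conj [] = Neg Bot"
| "Conj (a # as) = Neg (Imp a (Neg (Conj as)))"

lemma sat_Neg [simp]: "sat R V x (Neg a) \<longleftrightarrow> \<not> sat R V x a"
  by (simp add: Neg_def)

lemma sat_Box [simp]: "sat R V x (Box a) \<longleftrightarrow> (\<forall>y. R x y \<longrightarrow> sat R V y a)"
  by (simp add: Box_def)

lemma sat_Conj [simp]: "sat R V x (Conj as) \<longleftrightarrow> (\<forall>a\<in>set as. sat R V x a)"
  by (induction as) auto

definition Avoid :: "nat list \<Rightarrow> fm" where
  "Avoid is = Conj (map (\<lambda>i. Box (Neg (Var i))) is)"

definition helly_fm :: "nat \<Rightarrow> fm" where
  "helly_fm k =
    Imp (Conj (map (\<lambda>j. Dia (Dia (Avoid (remove1 j [0..<k])))) [0..<k])) (Dia (Dia (Avoid [0..<k])))"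

lemma exists_far_from_both:
  fixes x z :: "'a::euclidean_space"
  shows "\<exists>y. dist x y > 1 \<and> dist y z > 1"
proof -
  obtain b :: 'a where b: "b \<in> Basis"
    using nonempty_Basis by blast
  define y where "y = x + (dist x z + 2) *\<^sub>R b"
  have "dist x y = dist x z + 2"
    using b by (simp add: y_def dist_norm)
  moreover have "dist x y \<le> dist x z + dist y z"
    by (metis dist_commute dist_triangle)
  ultimately have "dist x y > 1" "dist y z > 1"
    using zero_le_dist[of x z] by linarith+
  then show ?thesis
    by blast
qed

lemma sat_Avoid_dist:
  "sat (\<lambda>x y. dist x y > 1) V z (Avoid is) \<longleftrightarrow> z \<in> (\<Inter>i\<in>set is. \<Inter>w\<in>V i. cball w 1)"
  unfolding Avoid_def by (auto simp: dist_commute[of z] not_less[symmetric])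

lemma sat_Dia_Dia_Avoid_dist:
  "sat (\<lambda>x y::'a::euclidean_space. dist x y > 1) V x (Dia (Dia (Avoid is))) \<longleftrightarrow>
    (\<Inter>i\<in>set is. \<Inter>w\<in>V i. cball w 1) \<noteq> {}"
proof -
  have "sat (\<lambda>x y. dist x y > 1) V x (Dia (Dia (Avoid is))) \<longleftrightarrow>
      (\<exists>y z. dist x y > 1 \<and> dist y z > 1 \<and> sat (\<lambda>x y. dist x y > 1) V z (Avoid is))"
    by simp
  also have "\<dots> \<longleftrightarrow> (\<exists>z. sat (\<lambda>x y. dist x y > 1) V z (Avoid is))"
    using exists_far_from_both by blast
  finally show ?thesis
    unfolding sat_Avoid_dist by blast
qed

lemma valid_helly_fm_iff:
  "valid_frame (\<lambda>x y::'a::euclidean_space. dist x y > 1) (helly_fm k) \<longleftrightarrow>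
    (\<forall>V. helly_condition {..<k} (\<lambda>i. \<Inter>w\<in>V i. cball (w::'a) 1))"
proof -
  have "sat (\<lambda>x y::'a. dist x y > 1) V x (helly_fm k) \<longleftrightarrow>
      helly_condition {..<k} (\<lambda>i. \<Inter>w\<in>V i. cball w 1)" for V x
    by (simp add: helly_fm_def helly_condition_def sat_Dia_Dia_Avoid_dist atLeast0LessThan
        del: sat.simps(4))
  then show ?thesis
    unfolding valid_frame_def by blast
qed

lemma valid_helly_fm:
  "valid_frame (\<lambda>x y::'a::euclidean_space. dist x y > 1) (helly_fm (DIM('a) + 2))"
  unfolding valid_helly_fm_iff by (auto intro!: helly_condition_convex convex_INT)

lemma not_valid_helly_fm:
  assumes "2 \<le> k" "k \<le> DIM('a) + 1"
  shows "\<not> valid_frame (\<lambda>x y::'a::euclidean_space. dist x y > 1) (helly_fm k)"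
proof -
  have "k - 1 \<le> card (Basis :: 'a set)"
    using assms by simp
  then obtain A :: "'a set" where A: "A \<subseteq> Basis" "card A = k - 1" "finite A"
    by (rule obtain_subset_with_card_n)
  then have "A \<noteq> {}"
    using assms by auto
  then obtain c r where r: "0 \<le> r" "r \<le> 1"
    and not_helly: "\<not> helly_condition (insert 0 A) (\<lambda>v. if v = 0 then cball c r else cball v 1)"
    using Basis_cballs_not_helly A(1) by blast
  have "0 \<notin> A"
    using A(1) Basis_zero by blast
  then have "card (insert 0 A) = k"
    using A assms by simp
  then obtain g where g: "bij_betw g {..<k} (insert 0 A)"
    using ex_bij_betw_nat_finite[of "insert 0 A"] \<open>finite A\<close> by (auto simp: atLeast0LessThan)
  define V where "V i = (if g i = 0 then sphere c (1 - r) else {g i})" for i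
  have "(\<lambda>v. if v = 0 then cball c r else cball v 1) \<circ> g = (\<lambda>i. \<Inter>w\<in>V i. cball w 1)"
  proof
    fix i
    show "((\<lambda>v. if v = 0 then cball c r else cball v 1) \<circ> g) i = (\<Inter>w\<in>V i. cball w 1)"
      using cball_eq_Inter_unit_cballs[OF r] by (cases "g i = 0") (simp_all add: V_def)
  qed
  then have "\<not> helly_condition {..<k} (\<lambda>i. \<Inter>w\<in>V i. cball w 1)"
    using not_helly helly_condition_reindex[OF g] by metis
  then show ?thesis
    unfolding valid_helly_fm_iff by blast
qed

theorem theorem3p3:
  assumes "CARD('n::finite) < CARD('m::finite)"
  shows "\<not> (Log_gt1 TYPE(real ^ 'n) \<subseteq> Log_gt1 TYPE(real ^ 'm))
         \<and> Log_gt1 TYPE(real ^ 'n) \<noteq> Log_gt1 TYPE(real ^ 'm)"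
proof -
  have "helly_fm (CARD('n) + 2) \<in> Log_gt1 TYPE(real ^ 'n)"
    using valid_helly_fm[where 'a = "real ^ 'n"] by (simp add: Log_gt1_def)
  moreover have "helly_fm (CARD('n) + 2) \<notin> Log_gt1 TYPE(real ^ 'm)"
    using not_valid_helly_fm[where 'a = "real ^ 'm", of "CARD('n) + 2"] assms
    by (simp add: Log_gt1_def)
  ultimately show ?thesis
    by blast
qed

end
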